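(* Let $\gamma\in(0,1)$, $\mu\in(0,\infty)\setminus\{1\}$. Let $g$ be a concave traveling wave with compact nonempty support, normalized so that its support is $[L,0]$. Let $s=\sup\{\xi:\sup_x\Phi_\xi[g](x)\ge\gamma\}$, and let $d$ be as in the context. Then for all $x\ge L$: $$\Phi_s[g](x)=\begin{cases}1-\gamma-x-\mu(s-x)_+ & \text{if } x>0,\\ 1-\gamma+g(x)-\mu(s-x)_+ & \text{if } d\le x\le 0,\\ 1-\gamma+g(d)-(d-x)-\mu(s-x)_+ & \text{if } x<d.\end{cases}$$
   Context: Let $\pi(x)=x$ if $x\ge0$ and $\pi(x)=-\infty$ otherwise. Write $x_+=\max(x,0)$ and use $\sup\emptyset=-\infty$. Define $\Phi_\xi[h](x)=1-\gamma-\mu(\xi-x)_++\sup_y(h(y)-|x-y|)$. The dynamics is defined for $n\ge1$ by: - $p_n(x)=\pi[1-\gamma+\sup_y(g_{n-1}(y)-\min(1,\mu)(x-y)_+)]$; - $s_n=\sup\{x:p_n(x)\ge\gamma\}$; - $g_n=\pi\circ\Phi_{s_n}[g_{n-1}]$. A traveling wave with speed $v$ is a $g$ with $g_0=g\Rightarrow g_n(x)=g(x-nv)$ for all $n,x$. The support is $\{g\ge0\}$ and $L=\inf\{x:g(x)>0\}$. Definition of $d$: if the a.e. derivative $g'$ satisfies $g'>1$ somewhere on $(L,0)$, then $d<0$ is the unique point with $g'>1$ on $(L,d)$ and $g'\le1$ on $(d,\infty)$. Otherwise $d:=L$. *)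

theory Defs
  imports "HOL-Analysis.Analysis" "HOL-Library.Extended_Real"
begin

definition pi_cut :: "ereal \<Rightarrow> ereal" where
  "pi_cut x = (if x \<ge> 0 then x else -\<infinity>)"

definition Phi :: "real \<Rightarrow> real \<Rightarrow> ereal \<Rightarrow> (real \<Rightarrow> ereal) \<Rightarrow> real \<Rightarrow> ereal" where
  "Phi \<gamma> \<mu> \<xi> h x =
     ereal (1 - \<gamma>) - ereal \<mu> * max (\<xi> - ereal x) 0 + (SUP y. h y - ereal \<bar>x - y\<bar>)"

definition p_step :: "real \<Rightarrow> real \<Rightarrow> (real \<Rightarrow> ereal) \<Rightarrow> real \<Rightarrow> ereal" where
  "p_step \<gamma> \<mu> h x =
     pi_cut (ereal (1 - \<gamma>) + (SUP y. h y - ereal (min 1 \<mu> * max (x - y) 0)))"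

text \<open>s_n = sup {x. p_n(x) >= gamma} (sup of the empty set is -infinity).\<close>
definition s_step :: "real \<Rightarrow> real \<Rightarrow> (real \<Rightarrow> ereal) \<Rightarrow> ereal" where
  "s_step \<gamma> \<mu> h = Sup {ereal x | x. p_step \<gamma> \<mu> h x \<ge> ereal \<gamma>}"

primrec gseq :: "real \<Rightarrow> real \<Rightarrow> (real \<Rightarrow> ereal) \<Rightarrow> nat \<Rightarrow> real \<Rightarrow> ereal" where
  "gseq \<gamma> \<mu> g 0 = g"
| "gseq \<gamma> \<mu> g (Suc n) =
     (\<lambda>x. pi_cut (Phi \<gamma> \<mu> (s_step \<gamma> \<mu> (gseq \<gamma> \<mu> g n)) (gseq \<gamma> \<mu> g n) x))"

definition traveling_wave :: "real \<Rightarrow> real \<Rightarrow> (real \<Rightarrow> ereal) \<Rightarrow> real \<Rightarrow> bool" where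
  "traveling_wave \<gamma> \<mu> g v \<longleftrightarrow> (\<forall>n x. gseq \<gamma> \<mu> g n x = g (x - real n * v))"

definition has_dg :: "(real \<Rightarrow> ereal) \<Rightarrow> real \<Rightarrow> real \<Rightarrow> bool" where
  "has_dg g x D \<longleftrightarrow> ((\<lambda>t. real_of_ereal (g t)) has_real_derivative D) (at x)"

definition d_of :: "(real \<Rightarrow> ereal) \<Rightarrow> real \<Rightarrow> real" where
  "d_of g L =
    (if \<exists>x\<in>{L<..<0}. \<exists>D. has_dg g x D \<and> D > 1
     then (THE d. d < 0 \<and> (\<forall>x\<in>{L<..<d}. \<forall>D. has_dg g x D \<longrightarrow> D > 1)
                        \<and> (\<forall>x\<in>{d<..}. \<forall>D. has_dg g x D \<longrightarrow> D \<le> 1))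
     else L)"

end

theory Submission
  imports Defs
begin

text \<open>Write \<open>h\<close> for the finite part of \<open>g\<close> on its support \<open>[L, 0]\<close>. As \<open>g\<close> reproduces
  itself after one step, the threshold \<open>s\<close> is finite and \<open>h y = \<Phi>\<^sub>s[g](y + v)\<close> on the support.
  Moving the argument of \<open>\<Phi>\<^sub>s[g]\<close> to the right by \<open>t\<close> lowers it by at most \<open>t\<close>; since \<open>g\<close>
  vanishes to the right of \<open>0\<close>, this forces \<open>h 0 = 0\<close> and \<open>h y \<le> -y\<close>, so every chord of \<open>h\<close>
  has slope at least \<open>-1\<close>. By concavity, \<open>d\<close> splits \<open>[L, 0]\<close> into a part where chords have
  slope at least \<open>1\<close> and a part where they have slope at most \<open>1\<close>; as \<open>d\<close> is defined through
  a.e. derivatives, this needs that a concave function is differentiable on a dense set and that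
  its chord slopes are controlled by its derivatives. The sup-convolution
  \<open>sup\<^sub>y (h y - \<bar>x - y\<bar>)\<close> is then \<open>-x\<close> right of \<open>0\<close>, \<open>h x\<close> on \<open>[d, 0]\<close>, and the line of slope
  \<open>1\<close> through \<open>(d, h d)\<close> left of \<open>d\<close>.\<close>

section \<open>Concave functions of a real variable\<close>

lemma concave_on_slope_le:
  fixes f :: "real \<Rightarrow> real"
  assumes "concave_on I f" "x \<in> I" "y \<in> I" "x < t" "t < y"
  shows "(f y - f x) / (y - x) \<le> (f t - f x) / (t - x)"
    and "(f y - f t) / (y - t) \<le> (f y - f x) / (y - x)"
proof -
  have "convex_on I (\<lambda>x. - f x)"
    using assms(1) by (simp add: concave_on_def)
  note slopes = convex_on_slope_le[OF this assms(2-5)]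
  have swap: "(- f p - - f q) / (p - q) = - ((f q - f p) / (q - p))" for p q
    by (simp add: minus_divide_right)
  show "(f y - f x) / (y - x) \<le> (f t - f x) / (t - x)"
    using slopes(1) unfolding swap by simp
  show "(f y - f t) / (y - t) \<le> (f y - f x) / (y - x)"
    using slopes(2) unfolding swap by simp
qed

lemma concave_on_subset: "concave_on T f \<Longrightarrow> S \<subseteq> T \<Longrightarrow> convex S \<Longrightarrow> concave_on S f"
  unfolding concave_on_def by (rule convex_on_subset)

lemma concave_on_below_tangent:
  fixes f :: "real \<Rightarrow> real"
  assumes "concave_on A f" "connected A" "c \<in> interior A" "x \<in> A"
    and "(f has_real_derivative D) (at c)"
  shows "f x \<le> f c + D * (x - c)"
proof -
  have "convex_on A (\<lambda>x. - f x)"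
    using assms(1) by (simp add: concave_on_def)
  moreover have "((\<lambda>x. - f x) has_real_derivative - D) (at c within A)"
    using DERIV_minus[OF assms(5)] by (rule has_field_derivative_at_within)
  ultimately have "- D * (x - c) \<le> - f x - - f c"
    using convex_on_imp_above_tangent assms(2-4) by blast
  then show ?thesis
    by (simp add: algebra_simps)
qed

lemma concave_on_derivative_antimono:
  fixes f :: "real \<Rightarrow> real"
  assumes "concave_on A f" "connected A" "x \<in> interior A" "y \<in> interior A" "x < y"
    and "(f has_real_derivative Dx) (at x)" "(f has_real_derivative Dy) (at y)"
  shows "Dy \<le> Dx"
proof -
  have "f y \<le> f x + Dx * (y - x)" "f x \<le> f y + Dy * (x - y)"
    using concave_on_below_tangent[OF assms(1,2)] assms(3,4,6,7) interior_subset by blast+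
  then have "Dy * (y - x) \<le> Dx * (y - x)"
    by (simp add: algebra_simps)
  then show ?thesis
    using assms(5) by simp
qed

definition right_slope :: "(real \<Rightarrow> real) \<Rightarrow> real \<Rightarrow> real \<Rightarrow> real" where
  "right_slope f b x = (SUP y\<in>{x<..<b}. (f y - f x) / (y - x))"

lemma concave_on_right_slope_bounds:
  fixes f :: "real \<Rightarrow> real"
  assumes conc: "concave_on {a..b} f" and "a < x" "x < y" "y < b"
  shows "right_slope f b y \<le> (f y - f x) / (y - x)"
    and "(f y - f x) / (y - x) \<le> right_slope f b x"
proof -
  have "bdd_above ((\<lambda>z. (f z - f x) / (z - x)) ` {x<..<b})"
  proof (rule bdd_aboveI2)
    fix z assume "z \<in> {x<..<b}"
    then show "(f z - f x) / (z - x) \<le> (f x - f a) / (x - a)"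
      using concave_on_slope_le[OF conc, of a z x] assms(2) by auto
  qed
  then show "(f y - f x) / (y - x) \<le> right_slope f b x"
    unfolding right_slope_def using assms(3,4) by (intro cSUP_upper) auto
  show "right_slope f b y \<le> (f y - f x) / (y - x)"
    unfolding right_slope_def
  proof (rule cSUP_least)
    fix z assume "z \<in> {y<..<b}"
    then show "(f z - f y) / (z - y) \<le> (f y - f x) / (y - x)"
      using concave_on_slope_le[OF conc, of x z y] assms by force
  qed (use assms(4) in auto)
qed

text \<open>The difference quotients at \<open>c\<close> are squeezed between the antitone right slope at \<open>c\<close>
  and at the other end point.\<close>
lemma concave_on_has_derivative_right_slope:
  fixes f :: "real \<Rightarrow> real"
  assumes conc: "concave_on {a..b} f" and c: "c \<in> {a<..<b}"
    and cont: "isCont (right_slope f b) c"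
  shows "(f has_real_derivative right_slope f b c) (at c)"
  unfolding has_field_derivative_iff
proof (rule tendsto_sandwich)
  let ?R = "right_slope f b"
  have R: "(?R \<longlongrightarrow> ?R c) (at c)"
    using cont by (simp add: isCont_def)
  show "((\<lambda>y. min (?R c) (?R y)) \<longlongrightarrow> ?R c) (at c)"
    using tendsto_min[OF tendsto_const[of "?R c"] R] by simp
  show "((\<lambda>y. max (?R c) (?R y)) \<longlongrightarrow> ?R c) (at c)"
    using tendsto_max[OF tendsto_const[of "?R c"] R] by simp
  have near: "\<forall>\<^sub>F y in at c. y \<in> {a<..<b} - {c}"
    using c by (intro eventually_at_in_open) auto
  have "min (?R c) (?R y) \<le> (f y - f c) / (y - c) \<and> (f y - f c) / (y - c) \<le> max (?R c) (?R y)"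
    if y: "y \<in> {a<..<b} - {c}" for y
  proof (cases "c < y")
    case True
    then show ?thesis
      using concave_on_right_slope_bounds[OF conc, of c y] c y by auto
  next
    case False
    then have "y < c" using y by auto
    moreover have "(f y - f c) / (y - c) = (f c - f y) / (c - y)"
      using minus_divide_divide[of "f y - f c" "y - c"] by simp
    ultimately show ?thesis
      using concave_on_right_slope_bounds[OF conc, of y c] c y by auto
  qed
  then have "\<forall>\<^sub>F y in at c. min (?R c) (?R y) \<le> (f y - f c) / (y - c)
      \<and> (f y - f c) / (y - c) \<le> max (?R c) (?R y)"
    by (rule eventually_mono[OF near])
  then show "\<forall>\<^sub>F y in at c. min (?R c) (?R y) \<le> (f y - f c) / (y - c)"
    and "\<forall>\<^sub>F y in at c. (f y - f c) / (y - c) \<le> max (?R c) (?R y)"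
    unfolding eventually_conj_iff by blast+
qed

lemma concave_on_Icc_exists_derivative:
  fixes f :: "real \<Rightarrow> real"
  assumes conc: "concave_on {a..b} f" and "a < b"
  obtains c D where "c \<in> {a<..<b}" "(f has_real_derivative D) (at c)"
proof -
  let ?R = "right_slope f b"
  have "mono_on {a<..<b} (\<lambda>x. - ?R x)"
  proof (rule mono_onI)
    fix x y assume "x \<in> {a<..<b}" "y \<in> {a<..<b}" "x \<le> y"
    then show "- ?R x \<le> - ?R y"
      using concave_on_right_slope_bounds[OF conc, of x y] by (cases "x = y") force+
  qed
  then have "countable {c \<in> {a<..<b}. \<not> isCont (\<lambda>x. - ?R x) c}"
    by (intro mono_on_ctble_discont_open) auto
  then obtain c where c: "c \<in> {a<..<b}" "isCont (\<lambda>x. - ?R x) c"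
    using open_minus_countable[of _ "{a<..<b}"] \<open>a < b\<close> by force
  then have "isCont ?R c"
    using isCont_minus[OF c(2)] by simp
  then show ?thesis
    using that c(1) concave_on_has_derivative_right_slope[OF conc c(1)] by blast
qed

lemma concave_on_slope_le_if_derivatives_le:
  fixes f :: "real \<Rightarrow> real"
  assumes conc: "concave_on {x..y} f" and cont: "continuous_on {x..y} f" and "x < y"
    and der: "\<And>w D. w \<in> {x<..<y} \<Longrightarrow> (f has_real_derivative D) (at w) \<Longrightarrow> D \<le> c"
  shows "f y - f x \<le> c * (y - x)"
proof (rule ccontr)
  assume "\<not> ?thesis"
  then have "c < (f y - f x) / (y - x)"
    using \<open>x < y\<close> by (simp add: field_simps)
  moreover have "((\<lambda>w. (f y - f w) / (y - w)) \<longlongrightarrow> (f y - f x) / (y - x)) (at_right x)"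
    using continuous_on_Icc_at_rightD[OF cont \<open>x < y\<close>] \<open>x < y\<close> by (intro tendsto_intros) auto
  ultimately have "\<forall>\<^sub>F w in at_right x. c < (f y - f w) / (y - w)"
    by (rule order_tendstoD(1)[rotated])
  then obtain b where "x < b" and b: "\<And>w. x < w \<Longrightarrow> w < b \<Longrightarrow> c < (f y - f w) / (y - w)"
    unfolding eventually_at_right_field by blast
  define w0 where "w0 = (x + min b y) / 2"
  have w0: "x < w0" "w0 < y" "c < (f y - f w0) / (y - w0)"
    using b[of w0] \<open>x < b\<close> \<open>x < y\<close> by (auto simp: w0_def)
  have "concave_on {x..w0} f"
    using w0 by (intro concave_on_subset[OF conc]) auto
  then obtain w D where w: "w \<in> {x<..<w0}" and D: "(f has_real_derivative D) (at w)"
    using concave_on_Icc_exists_derivative w0(1) by blast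
  have "f y \<le> f w + D * (y - w)"
    using concave_on_below_tangent[OF conc _ _ _ D] w w0 \<open>x < y\<close> by auto
  then have "(f y - f w) / (y - w) \<le> D"
    using w w0 by (simp add: field_simps)
  moreover have "(f y - f w0) / (y - w0) \<le> (f y - f w) / (y - w)"
    using concave_on_slope_le(2)[OF conc, of w y w0] w w0 by auto
  ultimately show False
    using der[OF _ D] w w0 by force
qed

lemma concave_on_slope_ge_if_derivatives_ge:
  fixes f :: "real \<Rightarrow> real"
  assumes conc: "concave_on {x..y} f" and cont: "continuous_on {x..y} f" and "x < y"
    and der: "\<And>w D. w \<in> {x<..<y} \<Longrightarrow> (f has_real_derivative D) (at w) \<Longrightarrow> c \<le> D"
  shows "c * (y - x) \<le> f y - f x"
proof (rule ccontr)
  assume "\<not> ?thesis"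
  then have "(f y - f x) / (y - x) < c"
    using \<open>x < y\<close> by (simp add: field_simps)
  moreover have "((\<lambda>w. (f w - f x) / (w - x)) \<longlongrightarrow> (f y - f x) / (y - x)) (at_left y)"
    using continuous_on_Icc_at_leftD[OF cont \<open>x < y\<close>] \<open>x < y\<close> by (intro tendsto_intros) auto
  ultimately have "\<forall>\<^sub>F w in at_left y. (f w - f x) / (w - x) < c"
    by (rule order_tendstoD(2)[rotated])
  then obtain b where "b < y" and b: "\<And>w. b < w \<Longrightarrow> w < y \<Longrightarrow> (f w - f x) / (w - x) < c"
    unfolding eventually_at_left_field by blast
  define w0 where "w0 = (max b x + y) / 2"
  have w0: "x < w0" "w0 < y" "(f w0 - f x) / (w0 - x) < c"
    using b[of w0] \<open>b < y\<close> \<open>x < y\<close> by (auto simp: w0_def)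
  have "concave_on {w0..y} f"
    using w0 by (intro concave_on_subset[OF conc]) auto
  then obtain w D where w: "w \<in> {w0<..<y}" and D: "(f has_real_derivative D) (at w)"
    using concave_on_Icc_exists_derivative w0(2) by blast
  have "f x \<le> f w + D * (x - w)"
    using concave_on_below_tangent[OF conc _ _ _ D] w w0 \<open>x < y\<close> by auto
  then have "D \<le> (f w - f x) / (w - x)"
    using w w0 by (simp add: field_simps)
  moreover have "(f w - f x) / (w - x) \<le> (f w0 - f x) / (w0 - x)"
    using concave_on_slope_le(1)[OF conc, of x w w0] w w0 by auto
  ultimately show False
    using der[OF _ D] w w0 by force
qed

definition derivative_threshold :: "(real \<Rightarrow> real) \<Rightarrow> real \<Rightarrow> real set \<Rightarrow> real \<Rightarrow> bool" where
  "derivative_threshold f c I d \<longleftrightarrow>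
     (\<forall>x\<in>I. \<forall>D. (f has_real_derivative D) (at x) \<longrightarrow> (x < d \<longrightarrow> c < D) \<and> (d < x \<longrightarrow> D \<le> c))"

lemma concave_on_derivative_threshold_exists:
  fixes f :: "real \<Rightarrow> real"
  assumes conc: "concave_on {a..b} f" and x0: "x0 \<in> {a<..<b}"
    and D0: "(f has_real_derivative D0) (at x0)" "c < D0"
  obtains d where "a < d" "d \<le> b" "derivative_threshold f c {a<..<b} d"
proof
  define S where "S = {x \<in> {a<..<b}. \<exists>D. (f has_real_derivative D) (at x) \<and> c < D}"
  have "x0 \<in> S" and bdd: "bdd_above S"
    using x0 D0 by (auto simp: S_def intro!: bdd_aboveI[of _ b])
  then have "S \<noteq> {}" by auto
  show "a < Sup S"
    using cSup_upper[OF \<open>x0 \<in> S\<close> bdd] x0 by auto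
  show "Sup S \<le> b"
    using \<open>S \<noteq> {}\<close> by (intro cSup_least) (auto simp: S_def)
  show "derivative_threshold f c {a<..<b} (Sup S)"
    unfolding derivative_threshold_def
  proof (intro ballI allI impI conjI)
    fix x D assume x: "x \<in> {a<..<b}" and D: "(f has_real_derivative D) (at x)"
    {
      assume "x < Sup S"
      then obtain x' D' where "x' \<in> {a<..<b}" "x < x'" "(f has_real_derivative D') (at x')" "c < D'"
        using less_cSup_iff[OF \<open>S \<noteq> {}\<close> bdd] by (auto simp: S_def)
      moreover have "D' \<le> D"
        using concave_on_derivative_antimono[OF conc _ _ _ _ D] calculation x by auto
      ultimately show "c < D" by simp
    }
    assume "Sup S < x"
    then have "x \<notin> S"
      using cSup_upper[OF _ bdd] by force
    then show "D \<le> c"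
      using x D by (auto simp: S_def)
  qed
qed

lemma concave_on_derivative_threshold_unique:
  fixes f :: "real \<Rightarrow> real"
  assumes conc: "concave_on {a..b} f" and "a < d1" "d1 \<le> b" "d2 \<le> b"
    and "derivative_threshold f c {a<..<b} d1" "derivative_threshold f c {a<..<b} d2"
  shows "d1 = d2"
proof (rule ccontr)
  assume "d1 \<noteq> d2"
  define lo where "lo = max a (min d1 d2)"
  define hi where "hi = max d1 d2"
  have "lo < hi" "a \<le> lo" "hi \<le> b"
    using assms(2-4) \<open>d1 \<noteq> d2\<close> by (auto simp: lo_def hi_def)
  then have "concave_on {lo..hi} f"
    by (intro concave_on_subset[OF conc]) auto
  then obtain w D where "w \<in> {lo<..<hi}" "(f has_real_derivative D) (at w)"
    using concave_on_Icc_exists_derivative \<open>lo < hi\<close> by blast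
  then show False
    using assms(5,6) \<open>a \<le> lo\<close> \<open>hi \<le> b\<close>
    unfolding derivative_threshold_def lo_def hi_def by force
qed

lemma concave_on_nonneg_le_twice_midpoint:
  fixes f :: "real \<Rightarrow> real"
  assumes conc: "concave_on {a..b} f" and nonneg: "\<And>x. x \<in> {a..b} \<Longrightarrow> 0 \<le> f x"
    and x: "x \<in> {a..b}"
  shows "f x \<le> 2 * f ((a + b) / 2)"
proof -
  have mid: "(1 - 1/2) *\<^sub>R x + (1/2) *\<^sub>R (a + b - x) = (a + b) / 2"
    by (simp add: field_simps)
  have "(1 - 1/2) * f x + 1/2 * f (a + b - x) \<le> f ((a + b) / 2)"
    using concave_onD[OF conc, of "1/2" x "a + b - x"] x unfolding mid by auto
  moreover have "0 \<le> f (a + b - x)"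
    using x by (intro nonneg) auto
  ultimately show ?thesis
    by simp
qed

section \<open>Suprema of penalized functions\<close>

lemma SUP_ereal_minus_supported:
  fixes g :: "'a \<Rightarrow> ereal" and f k :: "'a \<Rightarrow> real"
  assumes outside: "\<And>y. y \<notin> S \<Longrightarrow> g y = -\<infinity>" and inside: "\<And>y. y \<in> S \<Longrightarrow> g y = ereal (f y)"
    and "S \<noteq> {}" and bdd: "bdd_above ((\<lambda>y. f y - k y) ` S)"
  shows "(SUP y. g y - ereal (k y)) = ereal (SUP y\<in>S. f y - k y)"
proof (rule antisym)
  show "(SUP y. g y - ereal (k y)) \<le> ereal (SUP y\<in>S. f y - k y)"
  proof (rule SUP_least)
    fix y
    show "g y - ereal (k y) \<le> ereal (SUP y\<in>S. f y - k y)"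
      using outside[of y] inside[of y] cSUP_upper[OF _ bdd, of y] by (cases "y \<in> S") auto
  qed
  have "ereal (SUP y\<in>S. f y - k y) = (SUP y\<in>S. ereal (f y - k y))"
    using continuous_at_Sup_mono[of ereal "(\<lambda>y. f y - k y) ` S"] \<open>S \<noteq> {}\<close> bdd
    by (simp add: mono_def continuous_at_imp_continuous_at_within image_comp)
  also have "\<dots> = (SUP y\<in>S. g y - ereal (k y))"
    using inside by (intro SUP_cong) auto
  also have "\<dots> \<le> (SUP y. g y - ereal (k y))"
    by (intro SUP_subset_mono) auto
  finally show "ereal (SUP y\<in>S. f y - k y) \<le> (SUP y. g y - ereal (k y))" .
qed

lemma inf_convolution_pos_part_abs_le:
  fixes \<mu> \<xi> x y :: real
  assumes "0 \<le> \<mu>"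
  shows "min 1 \<mu> * max (\<xi> - y) 0 \<le> \<mu> * max (\<xi> - x) 0 + \<bar>x - y\<bar>"
proof (cases "\<xi> \<le> y")
  case False
  have "min 1 \<mu> * (\<xi> - y) \<le> min 1 \<mu> * (\<bar>x - y\<bar> + max (\<xi> - x) 0)"
    using assms by (intro mult_left_mono) auto
  also have "\<dots> = min 1 \<mu> * \<bar>x - y\<bar> + min 1 \<mu> * max (\<xi> - x) 0"
    by (simp add: distrib_left)
  also have "\<dots> \<le> \<bar>x - y\<bar> + \<mu> * max (\<xi> - x) 0"
    using assms by (intro add_mono mult_left_le_one_le mult_right_mono) auto
  finally show ?thesis
    using False by simp
qed (use assms in simp)

lemma inf_convolution_pos_part_abs_attained:
  fixes \<mu> \<xi> y :: real
  shows "\<exists>x. \<mu> * max (\<xi> - x) 0 + \<bar>x - y\<bar> = min 1 \<mu> * max (\<xi> - y) 0"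
proof (cases "\<xi> \<le> y \<or> \<mu> \<le> 1")
  case True
  then show ?thesis
    by (intro exI[of _ y]) auto
next
  case False
  then show ?thesis
    by (intro exI[of _ \<xi>]) auto
qed

section \<open>Concave traveling waves\<close>

locale concave_traveling_wave =
  fixes \<gamma> \<mu> L v :: real and g :: "real \<Rightarrow> ereal"
  assumes gamma_pos: "0 < \<gamma>" and gamma_less_one: "\<gamma> < 1" and mu_pos: "0 < \<mu>"
    and wave: "traveling_wave \<gamma> \<mu> g v"
    and L_nonpos: "L \<le> 0" and support: "{x. g x \<ge> 0} = {L..0}"
    and finite_values: "\<forall>x. g x \<noteq> \<infinity>"
    and concave: "concave_on {L..0} (\<lambda>x. real_of_ereal (g x))"
begin

definition profile :: "real \<Rightarrow> real" where
  "profile x = real_of_ereal (g x)"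

lemma concave_profile: "concave_on {L..0} profile"
  using concave by (simp add: profile_def[abs_def])

lemma has_dg_iff_profile: "has_dg g x D \<longleftrightarrow> (profile has_real_derivative D) (at x)"
  by (simp add: has_dg_def profile_def[abs_def])

lemma wave_step: "g (x - v) = pi_cut (Phi \<gamma> \<mu> (s_step \<gamma> \<mu> g) g x)"
  using wave[unfolded traveling_wave_def, rule_format, of "Suc 0" x] by simp

lemma support_iff: "0 \<le> g y \<longleftrightarrow> y \<in> {L..0}"
  by (metis mem_Collect_eq support)

lemma g_outside: "y \<notin> {L..0} \<Longrightarrow> g y = -\<infinity>"
  using wave_step[of "y + v"] support_iff[of y] by (auto simp: pi_cut_def split: if_splits)

lemma
  assumes "y \<in> {L..0}"
  shows g_inside: "g y = ereal (profile y)" and profile_nonneg: "0 \<le> profile y"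
  using support_iff[of y] finite_values assms by (cases "g y"; auto simp: profile_def)+

lemma bdd_above_profile_minus:
  assumes "\<And>y. 0 \<le> k y"
  shows "bdd_above ((\<lambda>y. profile y - k y) ` {L..0})"
proof (rule bdd_aboveI2)
  fix y :: real assume "y \<in> {L..0}"
  then have "profile y \<le> 2 * profile ((L + 0) / 2)"
    using concave_on_nonneg_le_twice_midpoint[OF concave_profile] profile_nonneg by blast
  then show "profile y - k y \<le> 2 * profile ((L + 0) / 2)"
    using assms[of y] by linarith
qed

lemma SUP_g_minus:
  assumes "\<And>y. 0 \<le> k y"
  shows "(SUP y. g y - ereal (k y)) = ereal (SUP y\<in>{L..0}. profile y - k y)"
  using g_outside g_inside L_nonpos bdd_above_profile_minus[OF assms]
  by (intro SUP_ereal_minus_supported) auto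

definition envelope :: "real \<Rightarrow> real" where
  "envelope x = (SUP y\<in>{L..0}. profile y - \<bar>x - y\<bar>)"

definition penalized_max :: "real \<Rightarrow> real" where
  "penalized_max \<xi> = (SUP y\<in>{L..0}. profile y - min 1 \<mu> * max (\<xi> - y) 0)"

lemma envelope_ge: "y \<in> {L..0} \<Longrightarrow> profile y - \<bar>x - y\<bar> \<le> envelope x"
  unfolding envelope_def using bdd_above_profile_minus[of "\<lambda>y. \<bar>x - y\<bar>"] by (intro cSUP_upper) auto

lemma envelope_le: "(\<And>y. y \<in> {L..0} \<Longrightarrow> profile y - \<bar>x - y\<bar> \<le> c) \<Longrightarrow> envelope x \<le> c"
  unfolding envelope_def using L_nonpos by (intro cSUP_least) auto

lemma penalized_max_ge: "y \<in> {L..0} \<Longrightarrow> profile y - min 1 \<mu> * max (\<xi> - y) 0 \<le> penalized_max \<xi>"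
  unfolding penalized_max_def using bdd_above_profile_minus[of "\<lambda>y. min 1 \<mu> * max (\<xi> - y) 0"] mu_pos
  by (intro cSUP_upper) auto

lemma penalized_max_le:
  "(\<And>y. y \<in> {L..0} \<Longrightarrow> profile y - min 1 \<mu> * max (\<xi> - y) 0 \<le> c) \<Longrightarrow> penalized_max \<xi> \<le> c"
  unfolding penalized_max_def using L_nonpos by (intro cSUP_least) auto

lemma Phi_ereal: "Phi \<gamma> \<mu> (ereal \<sigma>) g x = ereal (1 - \<gamma> - \<mu> * max (\<sigma> - x) 0 + envelope x)"
  unfolding Phi_def SUP_g_minus[OF abs_ge_zero] envelope_def by (simp add: max_def zero_ereal_def)

lemma Phi_minus_infinity: "Phi \<gamma> \<mu> (-\<infinity>) g x = ereal (1 - \<gamma> + envelope x)"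
  unfolding Phi_def SUP_g_minus[OF abs_ge_zero] envelope_def by (simp add: max_def zero_ereal_def)

lemma p_step_eq: "p_step \<gamma> \<mu> g \<xi> = pi_cut (ereal (1 - \<gamma> + penalized_max \<xi>))"
  unfolding p_step_def penalized_max_def using mu_pos by (subst SUP_g_minus) auto


lemma SUP_Phi: "(SUP x. Phi \<gamma> \<mu> (ereal \<xi>) g x) = ereal (1 - \<gamma> + penalized_max \<xi>)"
proof (rule antisym)
  have "envelope x \<le> penalized_max \<xi> + \<mu> * max (\<xi> - x) 0" for x
  proof (rule envelope_le)
    fix y assume "y \<in> {L..0}"
    then show "profile y - \<bar>x - y\<bar> \<le> penalized_max \<xi> + \<mu> * max (\<xi> - x) 0"
      using penalized_max_ge[of y \<xi>] inf_convolution_pos_part_abs_le[of \<mu> \<xi> y x] mu_pos by linarith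
  qed
  then have "1 - \<gamma> - \<mu> * max (\<xi> - x) 0 + envelope x \<le> 1 - \<gamma> + penalized_max \<xi>" for x
    by (smt (verit))
  then show "(SUP x. Phi \<gamma> \<mu> (ereal \<xi>) g x) \<le> ereal (1 - \<gamma> + penalized_max \<xi>)"
    by (intro SUP_least) (simp add: Phi_ereal)
  then obtain R where R: "(SUP x. Phi \<gamma> \<mu> (ereal \<xi>) g x) = ereal R"
    using SUP_upper[of 0 UNIV "Phi \<gamma> \<mu> (ereal \<xi>) g"] Phi_ereal[of \<xi> 0]
    by (cases "SUP x. Phi \<gamma> \<mu> (ereal \<xi>) g x") auto
  have "penalized_max \<xi> \<le> R - (1 - \<gamma>)"
  proof (rule penalized_max_le)
    fix y assume y: "y \<in> {L..0}"
    obtain x where x: "\<mu> * max (\<xi> - x) 0 + \<bar>x - y\<bar> = min 1 \<mu> * max (\<xi> - y) 0"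
      using inf_convolution_pos_part_abs_attained by blast
    have "Phi \<gamma> \<mu> (ereal \<xi>) g x \<le> ereal R"
      unfolding R[symmetric] by (rule SUP_upper) simp
    then show "profile y - min 1 \<mu> * max (\<xi> - y) 0 \<le> R - (1 - \<gamma>)"
      using envelope_ge[OF y, of x] x by (simp add: Phi_ereal)
  qed
  then show "ereal (1 - \<gamma> + penalized_max \<xi>) \<le> (SUP x. Phi \<gamma> \<mu> (ereal \<xi>) g x)"
    by (simp add: R)
qed

definition admissible :: "real set" where
  "admissible = {\<xi>. \<gamma> \<le> 1 - \<gamma> + penalized_max \<xi>}"

lemma threshold_set_eq_admissible:
  "{ereal \<xi> | \<xi>. (SUP x. Phi \<gamma> \<mu> (ereal \<xi>) g x) \<ge> ereal \<gamma>} = ereal ` admissible"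
  unfolding SUP_Phi admissible_def by auto

lemma s_step_eq_admissible: "s_step \<gamma> \<mu> g = Sup (ereal ` admissible)"
proof -
  have "p_step \<gamma> \<mu> g \<xi> \<ge> ereal \<gamma> \<longleftrightarrow> \<xi> \<in> admissible" for \<xi>
    using gamma_pos by (auto simp: p_step_eq pi_cut_def admissible_def)
  then show ?thesis
    unfolding s_step_def by (simp add: Setcompr_eq_image)
qed

lemma bdd_above_admissible: "bdd_above admissible"
proof (rule bdd_aboveI)
  define B where "B = 2 * profile (L / 2)"
  have B: "profile y \<le> B" if "y \<in> {L..0}" for y
    using concave_on_nonneg_le_twice_midpoint[OF concave_profile _ that] profile_nonneg
    by (simp add: B_def)
  fix \<xi> assume "\<xi> \<in> admissible"
  show "\<xi> \<le> max 0 ((1 + B) / min 1 \<mu>)"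
  proof (rule ccontr)
    assume "\<not> ?thesis"
    then have "0 < \<xi>" "(1 + B) / min 1 \<mu> < \<xi>"
      by auto
    then have "1 + B < min 1 \<mu> * \<xi>"
      using mu_pos by (simp add: pos_divide_less_eq mult.commute)
    moreover have "penalized_max \<xi> \<le> B - min 1 \<mu> * \<xi>"
    proof (rule penalized_max_le)
      fix y assume "y \<in> {L..0}"
      moreover have "min 1 \<mu> * \<xi> \<le> min 1 \<mu> * max (\<xi> - y) 0"
        using mu_pos calculation by (intro mult_left_mono) auto
      ultimately show "profile y - min 1 \<mu> * max (\<xi> - y) 0 \<le> B - min 1 \<mu> * \<xi>"
        using B by force
    qed
    ultimately show False
      using \<open>\<xi> \<in> admissible\<close> \<open>1 + B < min 1 \<mu> * \<xi>\<close> gamma_pos by (simp add: admissible_def)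
  qed
qed

text \<open>If no position were admissible, one step would be the bare sup-convolution shifted up by
  \<open>1 - \<gamma>\<close>, which would raise the maximum of the profile.\<close>
lemma admissible_nonempty: "admissible \<noteq> {}"
proof
  assume "admissible = {}"
  then have "s_step \<gamma> \<mu> g = -\<infinity>"
    by (simp add: s_step_eq_admissible bot_ereal_def)
  then have shift: "g (x - v) = pi_cut (ereal (1 - \<gamma> + envelope x))" for x
    using wave_step[of x] by (simp add: Phi_minus_infinity)
  have "penalized_max L \<le> penalized_max L - (1 - \<gamma>)"
  proof (rule penalized_max_le)
    fix y assume y: "y \<in> {L..0}"
    have up: "profile y \<le> envelope y"
      using envelope_ge[OF y, of y] by simp
    then have "0 \<le> 1 - \<gamma> + envelope y"
      using profile_nonneg[OF y] gamma_less_one by linarith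
    then have "g (y - v) = ereal (1 - \<gamma> + envelope y)"
      using shift[of y] by (simp add: pi_cut_def)
    moreover have "y - v \<in> {L..0}"
      using support_iff[of "y - v"] \<open>0 \<le> 1 - \<gamma> + envelope y\<close> calculation by simp
    ultimately have "profile (y - v) = 1 - \<gamma> + envelope y"
      using g_inside by simp
    moreover have "profile (y - v) \<le> penalized_max L"
      using penalized_max_ge[OF \<open>y - v \<in> {L..0}\<close>, of L] \<open>y - v \<in> {L..0}\<close> by simp
    ultimately show "profile y - min 1 \<mu> * max (L - y) 0 \<le> penalized_max L - (1 - \<gamma>)"
      using up y by simp
  qed
  then show False
    using gamma_less_one by simp
qed

definition s_wave :: real where
  "s_wave = Sup admissible"

lemma Sup_ereal_admissible: "Sup (ereal ` admissible) = ereal s_wave"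
  using continuous_at_Sup_mono[of ereal admissible] admissible_nonempty bdd_above_admissible
  by (simp add: s_wave_def mono_def continuous_at_imp_continuous_at_within)


lemma s_step_eq: "s_step \<gamma> \<mu> g = ereal s_wave"
  using s_step_eq_admissible Sup_ereal_admissible by simp

definition phi :: "real \<Rightarrow> real" where
  "phi x = 1 - \<gamma> - \<mu> * max (s_wave - x) 0 + envelope x"

lemma Phi_s_wave: "Phi \<gamma> \<mu> (ereal s_wave) g x = ereal (phi x)"
  by (simp add: Phi_ereal phi_def)

lemma wave_step_phi: "g (x - v) = pi_cut (ereal (phi x))"
  using wave_step[of x] by (simp add: s_step_eq Phi_s_wave)

lemma profile_eq_phi: "y \<in> {L..0} \<Longrightarrow> profile y = phi (y + v)"
  using wave_step_phi[of "y + v"] g_inside[of y] by (auto simp: pi_cut_def split: if_splits)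

lemma phi_neg_outside: "y \<notin> {L..0} \<Longrightarrow> phi (y + v) < 0"
  using wave_step_phi[of "y + v"] support_iff[of y] by (auto simp: pi_cut_def split: if_splits)

lemma profile_outside: "y \<notin> {L..0} \<Longrightarrow> profile y = 0"
  by (simp add: profile_def g_outside)

lemma envelope_lipschitz: "envelope x \<le> envelope x' + \<bar>x - x'\<bar>"
proof (rule envelope_le)
  fix y assume "y \<in> {L..0}"
  then show "profile y - \<bar>x - y\<bar> \<le> envelope x' + \<bar>x - x'\<bar>"
    using envelope_ge[of y x'] by linarith
qed

lemma phi_shift_right:
  assumes "0 \<le> t"
  shows "phi x - t \<le> phi (x + t)"
proof -
  have "\<mu> * max (s_wave - (x + t)) 0 \<le> \<mu> * max (s_wave - x) 0"
    using mu_pos assms by (intro mult_left_mono) auto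
  then show ?thesis
    using envelope_lipschitz[of x "x + t"] assms by (simp add: phi_def)
qed

lemma profile_zero: "profile 0 = 0"
proof (rule ccontr)
  assume "profile 0 \<noteq> 0"
  then have pos: "0 < profile 0"
    using profile_nonneg[of 0] L_nonpos by auto
  have "profile 0 - profile 0 \<le> phi (profile 0 + v)"
    using phi_shift_right[of "profile 0" v] profile_eq_phi[of 0] L_nonpos pos by (simp add: add.commute)
  moreover have "phi (profile 0 + v) < 0"
    using phi_neg_outside[of "profile 0"] pos by simp
  ultimately show False
    by simp
qed

lemma profile_le_neg: "y \<in> {L..0} \<Longrightarrow> profile y \<le> - y"
  using phi_shift_right[of "- y" "y + v"] profile_eq_phi[of y] profile_eq_phi[of 0] profile_zero L_nonpos
  by simp

lemma continuous_on_profile: "continuous_on {L..0} profile"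
proof -
  have "1-lipschitz_on UNIV envelope"
  proof (rule lipschitz_onI)
    fix x y :: real
    show "dist (envelope x) (envelope y) \<le> 1 * dist x y"
      using envelope_lipschitz[of x y] envelope_lipschitz[of y x]
      by (simp add: dist_real_def abs_le_iff abs_minus_commute)
  qed simp
  then have "continuous_on UNIV envelope"
    by (rule lipschitz_on_continuous_on)
  then have "continuous_on UNIV phi"
    unfolding phi_def[abs_def] by (intro continuous_intros)
  then have "continuous_on {L..0} (\<lambda>y. phi (y + v))"
    by (rule continuous_on_compose2) (auto intro: continuous_intros)
  then show ?thesis
    by (rule continuous_on_eq) (simp add: profile_eq_phi)
qed

lemma profile_derivative_le_one:
  assumes "L \<le> 2 * x" and D: "(profile has_real_derivative D) (at x)"
  shows "D \<le> 1"
proof (cases "0 \<le> x")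
  case True
  have zero: "profile y = 0" if "x \<le> y" for y
    using profile_zero profile_outside[of y] True that by (cases "y = 0") auto
  show ?thesis
  proof (rule ccontr)
    assume "\<not> D \<le> 1"
    then obtain e where "0 < e" "\<And>t. 0 < t \<Longrightarrow> t < e \<Longrightarrow> profile x < profile (x + t)"
      using DERIV_pos_inc_right[OF D] by force
    then have "profile x < profile (x + e / 2)"
      by simp
    then show False
      using zero[of x] zero[of "x + e / 2"] \<open>0 < e\<close> by simp
  qed
next
  case False
  then have "L < x"
    using assms(1) by simp
  then have "profile L \<le> profile x + D * (L - x)"
    using concave_on_below_tangent[OF concave_profile _ _ _ D] False L_nonpos by auto
  then have "D * (x - L) \<le> 1 * (x - L)"
    using profile_le_neg[of x] profile_nonneg[of L] False \<open>L < x\<close> assms(1) by (simp add: algebra_simps)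
  then show ?thesis
    using \<open>L < x\<close> by simp
qed

lemma profile_slope_ge_neg_one:
  assumes "L \<le> y" "y < x" "x \<le> 0"
  shows "y - x \<le> profile x - profile y"
proof (cases "x = 0")
  case True
  then show ?thesis
    using profile_le_neg[of y] profile_zero assms by simp
next
  case False
  then have "(profile 0 - profile y) / (0 - y) \<le> (profile x - profile y) / (x - y)"
    using concave_on_slope_le(1)[OF concave_profile, of y 0 x] assms by auto
  moreover have "-1 \<le> (profile 0 - profile y) / (0 - y)"
    using profile_le_neg[of y] profile_zero assms False by (simp add: field_simps)
  ultimately have "-1 \<le> (profile x - profile y) / (x - y)"
    by linarith
  then show ?thesis
    using assms by (simp add: le_divide_eq)
qed


lemma profile_threshold_exists:
  assumes x0: "x0 \<in> {L<..<0}" "(profile has_real_derivative D0) (at x0)" "1 < D0"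
  obtains d where "L < d" "d < 0"
    "\<And>x D. x \<in> {L<..<d} \<Longrightarrow> (profile has_real_derivative D) (at x) \<Longrightarrow> 1 < D"
    "\<And>x D. d < x \<Longrightarrow> (profile has_real_derivative D) (at x) \<Longrightarrow> D \<le> 1"
proof -
  \<comment> \<open>Derivatives are at most \<open>1\<close> from \<open>L/2\<close> on, so the threshold lies in \<open>(L, L/2]\<close>.\<close>
  have "x0 \<in> {L<..<L/2}"
    using profile_derivative_le_one[of x0 D0] x0 by force
  moreover have "concave_on {L..L/2} profile"
    using L_nonpos by (intro concave_on_subset[OF concave_profile]) auto
  ultimately obtain d where d: "L < d" "d \<le> L/2" "derivative_threshold profile 1 {L<..<L/2} d"
    using concave_on_derivative_threshold_exists x0(2,3) by blast
  show ?thesis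
  proof (rule that)
    show "L < d" "d < 0"
      using d by auto
    show "1 < D" if "x \<in> {L<..<d}" "(profile has_real_derivative D) (at x)" for x D
      using d that unfolding derivative_threshold_def by auto
    show "D \<le> 1" if "d < x" "(profile has_real_derivative D) (at x)" for x D
    proof (cases "x < L/2")
      case True
      then show ?thesis
        using d that unfolding derivative_threshold_def by auto
    next
      case False
      then show ?thesis
        using profile_derivative_le_one[OF _ that(2)] by simp
    qed
  qed
qed

lemma d_of_threshold:
  "L \<le> d_of g L" "d_of g L \<le> 0" "derivative_threshold profile 1 {L<..<0} (d_of g L)"
proof -
  have "L \<le> d_of g L \<and> d_of g L \<le> 0 \<and> derivative_threshold profile 1 {L<..<0} (d_of g L)"
  proof (cases "\<exists>x\<in>{L<..<0}. \<exists>D. has_dg g x D \<and> D > 1")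
    case False
    then have "d_of g L = L"
      unfolding d_of_def by (rule if_not_P)
    with False show ?thesis
      using L_nonpos by (auto simp: derivative_threshold_def has_dg_iff_profile not_less)
  next
    case True
    then obtain x0 D0 where "x0 \<in> {L<..<0}" "(profile has_real_derivative D0) (at x0)" "1 < D0"
      by (auto simp: has_dg_iff_profile)
    then obtain d where d: "L < d" "d < 0"
      and below: "\<And>x D. x \<in> {L<..<d} \<Longrightarrow> (profile has_real_derivative D) (at x) \<Longrightarrow> 1 < D"
      and above: "\<And>x D. d < x \<Longrightarrow> (profile has_real_derivative D) (at x) \<Longrightarrow> D \<le> 1"
      using profile_threshold_exists by blast
    have threshold: "derivative_threshold profile 1 {L<..<0} d"
      using below above unfolding derivative_threshold_def by auto
    have "d_of g L = d"
      unfolding d_of_def if_P[OF True]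
    proof (rule the_equality)
      show "d < 0 \<and> (\<forall>x\<in>{L<..<d}. \<forall>D. has_dg g x D \<longrightarrow> D > 1)
          \<and> (\<forall>x\<in>{d<..}. \<forall>D. has_dg g x D \<longrightarrow> D \<le> 1)"
        using below above d by (auto simp: has_dg_iff_profile)
    next
      fix d' assume "d' < 0 \<and> (\<forall>x\<in>{L<..<d'}. \<forall>D. has_dg g x D \<longrightarrow> D > 1)
          \<and> (\<forall>x\<in>{d'<..}. \<forall>D. has_dg g x D \<longrightarrow> D \<le> 1)"
      then have "d' \<le> 0" "derivative_threshold profile 1 {L<..<0} d'"
        by (auto simp: derivative_threshold_def has_dg_iff_profile)
      then show "d' = d"
        using concave_on_derivative_threshold_unique[OF concave_profile, of d d' 1] d threshold
        by simp
    qed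
    then show ?thesis
      using d threshold by auto
  qed
  then show "L \<le> d_of g L" "d_of g L \<le> 0" "derivative_threshold profile 1 {L<..<0} (d_of g L)"
    by auto
qed

lemma profile_slope_le_one:
  assumes "d_of g L \<le> x" "x < y" "y \<le> 0"
  shows "profile y - profile x \<le> y - x"
proof -
  have "profile y - profile x \<le> 1 * (y - x)"
  proof (rule concave_on_slope_le_if_derivatives_le)
    show "concave_on {x..y} profile" "continuous_on {x..y} profile"
      using assms d_of_threshold(1)
      by (auto intro: concave_on_subset[OF concave_profile] continuous_on_subset[OF continuous_on_profile])
    fix w D assume w: "w \<in> {x<..<y}" and D: "(profile has_real_derivative D) (at w)"
    have "w \<in> {L<..<0}" "d_of g L < w"
      using w assms d_of_threshold(1) by auto
    then show "D \<le> 1"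
      using d_of_threshold(3) D unfolding derivative_threshold_def by blast
  qed fact
  then show ?thesis
    by simp
qed

lemma profile_slope_ge_one:
  assumes "L \<le> y" "y < x" "x \<le> d_of g L"
  shows "x - y \<le> profile x - profile y"
proof -
  have "1 * (x - y) \<le> profile x - profile y"
  proof (rule concave_on_slope_ge_if_derivatives_ge)
    show "concave_on {y..x} profile" "continuous_on {y..x} profile"
      using assms d_of_threshold(2)
      by (auto intro: concave_on_subset[OF concave_profile] continuous_on_subset[OF continuous_on_profile])
    fix w D assume w: "w \<in> {y<..<x}" and D: "(profile has_real_derivative D) (at w)"
    have "w \<in> {L<..<0}" "w < d_of g L"
      using w assms d_of_threshold(2) by auto
    then show "1 \<le> D"
      using d_of_threshold(3) D unfolding derivative_threshold_def by force
  qed fact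
  then show ?thesis
    by simp
qed

lemma envelope_right:
  assumes "0 < x"
  shows "envelope x = - x"
proof (rule antisym)
  show "envelope x \<le> - x"
  proof (rule envelope_le)
    fix y assume "y \<in> {L..0}"
    then show "profile y - \<bar>x - y\<bar> \<le> - x"
      using profile_le_neg[of y] assms by simp
  qed
  show "- x \<le> envelope x"
    using envelope_ge[of 0 x] profile_zero L_nonpos assms by simp
qed

lemma envelope_middle:
  assumes "d_of g L \<le> x" "x \<le> 0"
  shows "envelope x = profile x"
proof (rule antisym)
  show "envelope x \<le> profile x"
  proof (rule envelope_le)
    fix y assume y: "y \<in> {L..0}"
    show "profile y - \<bar>x - y\<bar> \<le> profile x"
    proof (cases "y \<le> x")
      case True
      then show ?thesis
        using profile_slope_ge_neg_one[of y x] assms y by (cases "y = x") auto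
    next
      case False
      then show ?thesis
        using profile_slope_le_one[of x y] assms y by simp
    qed
  qed
  show "profile x \<le> envelope x"
    using envelope_ge[of x x] assms d_of_threshold(1) by simp
qed

lemma envelope_left:
  assumes "L \<le> x" "x < d_of g L"
  shows "envelope x = profile (d_of g L) - (d_of g L - x)"
proof (rule antisym)
  let ?d = "d_of g L"
  show "envelope x \<le> profile ?d - (?d - x)"
  proof (rule envelope_le)
    fix y assume y: "y \<in> {L..0}"
    show "profile y - \<bar>x - y\<bar> \<le> profile ?d - (?d - x)"
    proof (cases "y \<le> ?d")
      case True
      then have "?d - y \<le> profile ?d - profile y"
        using profile_slope_ge_one[of y ?d] y by (cases "y = ?d") auto
      then show ?thesis
        by (simp add: abs_if)
    next
      case False
      then show ?thesis
        using profile_slope_le_one[of ?d y] assms y by simp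
    qed
  qed
  show "profile ?d - (?d - x) \<le> envelope x"
    using envelope_ge[of ?d x] assms d_of_threshold(1,2) by simp
qed

end

theorem corollaryS3p3:
  fixes \<gamma> \<mu> L v :: real and g :: "real \<Rightarrow> ereal"
  assumes "0 < \<gamma>" "\<gamma> < 1" "0 < \<mu>" "\<mu> \<noteq> 1"
    and "traveling_wave \<gamma> \<mu> g v"
    and "L \<le> 0" "{x. g x \<ge> 0} = {L..0}"
    and "\<forall>x. g x \<noteq> \<infinity>"
    and "concave_on {L..0} (\<lambda>x. real_of_ereal (g x))"
  shows "\<exists>s::real. Sup {ereal \<xi> | \<xi>. (SUP x. Phi \<gamma> \<mu> (ereal \<xi>) g x) \<ge> ereal \<gamma>} = ereal s \<and>
     (\<forall>x\<ge>L. Phi \<gamma> \<mu> (ereal s) g x =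
        (if x > 0 then ereal (1 - \<gamma> - x - \<mu> * max (s - x) 0)
         else if d_of g L \<le> x then ereal (1 - \<gamma>) + g x - ereal (\<mu> * max (s - x) 0)
         else ereal (1 - \<gamma>) + g (d_of g L) - ereal (d_of g L - x) - ereal (\<mu> * max (s - x) 0)))"
proof -
  interpret concave_traveling_wave \<gamma> \<mu> L v g
    using assms by unfold_locales auto
  let ?d = "d_of g L"
  have "Phi \<gamma> \<mu> (ereal s_wave) g x =
      (if x > 0 then ereal (1 - \<gamma> - x - \<mu> * max (s_wave - x) 0)
       else if ?d \<le> x then ereal (1 - \<gamma>) + g x - ereal (\<mu> * max (s_wave - x) 0)
       else ereal (1 - \<gamma>) + g ?d - ereal (?d - x) - ereal (\<mu> * max (s_wave - x) 0))"
    if "L \<le> x" for x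
  proof -
    consider "0 < x" | "?d \<le> x" "x \<le> 0" | "x < ?d"
      by linarith
    then show ?thesis
    proof cases
      case 1
      then show ?thesis
        by (simp add: Phi_s_wave phi_def envelope_right)
    next
      case 2
      then show ?thesis
        using that by (simp add: Phi_s_wave phi_def envelope_middle g_inside)
    next
      case 3
      then show ?thesis
        using that d_of_threshold(1,2) by (simp add: Phi_s_wave phi_def envelope_left g_inside)
    qed
  qed
  then show ?thesis
    using threshold_set_eq_admissible Sup_ereal_admissible by auto
qed

end
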